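(* For every positive integer $n$ there exists a rooted tree with at most $n^{1.894}$ nodes that contains every binary rooted tree on $n$ nodes as a topological minor. Consequently, binary rooted trees on $n$ nodes admit an NCA labeling scheme with labels of at most $\lceil 1.894\log_2 n\rceil$ bits.
   Context: Trees are rooted and unordered, with edges directed from parent to child. The degree of a node is its number of children. A tree is binary if every node has at most two children. A rooted tree $T$ is a topological minor of a rooted tree $U$ if there is an injective map $f$ from the nodes of $T$ to the nodes of $U$ with $f(\mathsf{NCA}(u,v))=\mathsf{NCA}(f(u),f(v))$ for all nodes $u,v$ of $T$. Here $\mathsf{NCA}$ denotes the nearest common ancestor. Equivalently, $U$ contains as a subgraph a subdivision of $T$ that respects the root/edge directions. An NCA labeling scheme for a class of trees consists of an encoder and a decoder. The encoder assigns distinct binary strings (labels) to the nodes of each tree in the class. The decoder, given only the labels of two nodes $u,v$ of the same tree, outputs the label of $\mathsf{NCA}(u,v)$. *)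

theory Defs
  imports Complex_Main
begin

text \<open>The children are stored in a list, but every notion below
  (node set, NCA, binarity, topological minor) is insensitive to child order, so this
  represents rooted unordered trees (up to isomorphism). Nodes are addressed by
  their positions: the root is [], and the i-th child of node p is p @ [i] (written as
  a path from the root).\<close>

datatype rtree = Node "rtree list"

primrec nodes :: "rtree \<Rightarrow> nat list set" where
  "nodes (Node ts) = insert [] (\<Union>i<length ts. (Cons i) ` (map nodes ts ! i))"

primrec binary :: "rtree \<Rightarrow> bool" where
  "binary (Node ts) = (length ts \<le> 2 \<and> list_all id (map binary ts))"

fun nca :: "nat list \<Rightarrow> nat list \<Rightarrow> nat list" where
  "nca (x # xs) (y # ys) = (if x = y then x # nca xs ys else [])"
| "nca _ _ = []"

definition top_minor :: "rtree \<Rightarrow> rtree \<Rightarrow> bool" where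
  "top_minor T U \<longleftrightarrow> (\<exists>f. inj_on f (nodes T) \<and> f ` nodes T \<subseteq> nodes U \<and>
      (\<forall>u\<in>nodes T. \<forall>v\<in>nodes T. f (nca u v) = nca (f u) (f v)))"

end

theory Submission
  imports Defs "HOL-Library.Sublist"
begin

(* A universal tree for the binary trees with at most n nodes is built as a spine: a path of n
   nodes whose i-th node carries, as a second child, a universal tree for size s_i. A binary tree
   is embedded along its heavy path: at a node whose light subtree has d nodes, walk down the
   spine to a position i <= d with s_i >= d, embed the light subtree into the pendant tree there
   and continue with the heavy subtree on the rest of the spine. Taking for s a block of length
   3n/10 in which every size d is reached by position d, then the entry (n - 1)/2, then
   recursively the sequence for the remaining length, the sizes satisfy a recurrence solved by
   n^beta - 3/2 (n - 1) with beta = 89/47 < 1.894. Labeling the nodes of this universal tree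
   injectively by bit strings of length ceil(1.894 log n) gives the NCA labeling scheme, since a
   topological-minor embedding commutes with NCA. *)

section \<open>Trees and embeddings\<close>

lemma finite_nodes: "finite (nodes T)"
  by (induction T) (auto simp: nth_mem)

lemma Nil_in_nodes: "[] \<in> nodes T"
  by (cases T) simp

lemma card_nodes_pos: "0 < card (nodes T)"
  using Nil_in_nodes finite_nodes card_gt_0_iff by blast

lemma card_nodes_Node: "card (nodes (Node ts)) = Suc (\<Sum>t\<leftarrow>ts. card (nodes t))"
proof -
  let ?C = "\<lambda>i. Cons i ` nodes (ts ! i)"
  have "card (\<Union>i<length ts. ?C i) = (\<Sum>i<length ts. card (?C i))"
    by (rule card_UN_disjoint) (auto simp: finite_nodes)
  also have "\<dots> = (\<Sum>t\<leftarrow>ts. card (nodes t))"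
    by (simp add: card_image sum_list_sum_nth atLeast0LessThan)
  finally show ?thesis
    using finite_nodes by (auto simp: card_insert_if)
qed

lemma top_minor_child:
  assumes "i < length us" "top_minor T (us ! i)"
  shows "top_minor T (Node us)"
proof -
  obtain f where "inj_on f (nodes T)" "f ` nodes T \<subseteq> nodes (us ! i)"
    "\<forall>u\<in>nodes T. \<forall>v\<in>nodes T. f (nca u v) = nca (f u) (f v)"
    using assms(2) unfolding top_minor_def by blast
  then show ?thesis
    using assms(1) unfolding top_minor_def
    by (intro exI[of _ "\<lambda>p. i # f p"]) (auto simp: inj_on_def image_subset_iff intro!: bexI[of _ i])
qed

lemma top_minor_Node:
  assumes g: "inj_on g {..<length ts}"
    and sub: "\<forall>i<length ts. g i < length us \<and> top_minor (ts ! i) (us ! g i)"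
  shows "top_minor (Node ts) (Node us)"
proof -
  obtain F where F: "\<forall>i<length ts. inj_on (F i) (nodes (ts ! i)) \<and>
      F i ` nodes (ts ! i) \<subseteq> nodes (us ! g i) \<and>
      (\<forall>u\<in>nodes (ts ! i). \<forall>v\<in>nodes (ts ! i). F i (nca u v) = nca (F i u) (F i v))"
    using sub unfolding top_minor_def by metis
  define f where "f p = (case p of [] \<Rightarrow> [] | i # q \<Rightarrow> g i # F i q)" for p
  have f_simps [simp]: "f [] = []" "f (i # q) = g i # F i q" for i q
    by (simp_all add: f_def)
  have g_eq: "g i = g j \<longleftrightarrow> i = j" if "i < length ts" "j < length ts" for i j
    using g that unfolding inj_on_def by blast
  have "inj_on f (nodes (Node ts))"
    using F g_eq by (auto simp: inj_on_def)
  moreover have "f ` nodes (Node ts) \<subseteq> nodes (Node us)"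
    using F sub by fastforce
  moreover have "f (nca u v) = nca (f u) (f v)" if "u \<in> nodes (Node ts)" "v \<in> nodes (Node ts)" for u v
    using that F g_eq by auto
  ultimately show ?thesis
    unfolding top_minor_def by blast
qed

inductive embeds :: "rtree \<Rightarrow> rtree \<Rightarrow> bool" where
  embeds_child: "i < length us \<Longrightarrow> embeds T (us ! i) \<Longrightarrow> embeds T (Node us)"
| embeds_Node: "inj_on g {..<length ts} \<Longrightarrow>
    (\<forall>i<length ts. g i < length us \<and> embeds (ts ! i) (us ! g i)) \<Longrightarrow> embeds (Node ts) (Node us)"

lemma embeds_imp_top_minor: "embeds T U \<Longrightarrow> top_minor T U"
  by (induction rule: embeds.induct) (auto intro: top_minor_child top_minor_Node)

lemma embeds_leaf: "embeds (Node []) (Node us)"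
  by (rule embeds_Node[of id]) simp_all

lemma embeds_Node_single:
  assumes "i < length us" "embeds A (us ! i)"
  shows "embeds (Node [A]) (Node us)"
  by (rule embeds_Node[of "\<lambda>_. i"]) (use assms in \<open>auto simp: inj_on_def\<close>)

lemma embeds_Node_pair:
  assumes "embeds A X" "embeds B Y"
  shows "embeds (Node [A, B]) (Node [X, Y])" and "embeds (Node [B, A]) (Node [X, Y])"
proof -
  show "embeds (Node [A, B]) (Node [X, Y])"
    by (rule embeds_Node[of id]) (use assms in \<open>auto simp: less_Suc_eq\<close>)
  show "embeds (Node [B, A]) (Node [X, Y])"
    by (rule embeds_Node[of "\<lambda>i. 1 - i"]) (use assms in \<open>auto simp: inj_on_def less_Suc_eq\<close>)
qed

section \<open>Spines\<close>

definition pendant :: "(nat \<Rightarrow> rtree) \<Rightarrow> nat \<Rightarrow> rtree list" where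
  "pendant H m = (if m = 0 then [] else [H m])"

fun spine :: "(nat \<Rightarrow> rtree) \<Rightarrow> nat list \<Rightarrow> rtree" where
  "spine H [] = Node []"
| "spine H [m] = Node (pendant H m)"
| "spine H (m # m' # ms) = Node (pendant H m @ [spine H (m' # ms)])"

lemma spine_Cons: "ys \<noteq> [] \<Longrightarrow> spine H (m # ys) = Node (pendant H m @ [spine H ys])"
  by (cases ys) auto

lemma spine_drop_nth:
  "Suc i < length ys \<Longrightarrow> spine H (drop i ys) = Node (pendant H (ys ! i) @ [spine H (drop (Suc i) ys)])"
  by (simp add: Cons_nth_drop_Suc[symmetric] spine_Cons)

lemma card_nodes_spine:
  "ys \<noteq> [] \<Longrightarrow> card (nodes (spine H ys)) = length ys + (\<Sum>m\<leftarrow>ys. \<Sum>t\<leftarrow>pendant H m. card (nodes t))"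
proof (induction ys)
  case (Cons m ys)
  then show ?case
    by (cases "ys = []") (simp_all del: nodes.simps add: spine_Cons card_nodes_Node)
qed simp

lemma embeds_spine_drop:
  "i < length ys \<Longrightarrow> embeds T (spine H (drop i ys)) \<Longrightarrow> embeds T (spine H ys)"
proof (induction i arbitrary: ys)
  case (Suc i)
  then obtain y ys' where ys: "ys = y # ys'" and "i < length ys'"
    by (cases ys) auto
  then have "embeds T (spine H ys')"
    using Suc by simp
  moreover have "spine H ys = Node (pendant H y @ [spine H ys'])"
    unfolding ys by (rule spine_Cons) (use \<open>i < length ys'\<close> in auto)
  ultimately show ?case
    by (auto intro: embeds_child[of "length (pendant H y)"])
qed simp

(* Entry i of ys is the size of the universal tree hanging at depth i of a spine. covers D ys
   says that a light subtree of any size d < D finds a pendant tree of size at least d no deeper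
   than d, so that the heavy subtree still has enough spine below. *)
definition covers :: "nat \<Rightarrow> nat list \<Rightarrow> bool" where
  "covers D ys \<longleftrightarrow> (\<forall>d<D. \<exists>i\<le>d. i < length ys \<and> d \<le> ys ! i)"

definition suffixes_cover :: "(nat \<Rightarrow> nat) \<Rightarrow> nat list \<Rightarrow> bool" where
  "suffixes_cover D ys \<longleftrightarrow> (\<forall>zs. suffix zs ys \<longrightarrow> covers (D (length zs)) zs)"

lemma covers_append_Cons:
  assumes "covers (length as) as" "D \<le> Suc x"
  shows "covers D (as @ x # bs)"
  unfolding covers_def
proof (intro allI impI)
  fix d assume "d < D"
  show "\<exists>i\<le>d. i < length (as @ x # bs) \<and> d \<le> (as @ x # bs) ! i"
  proof (cases "d < length as")
    case True
    then show ?thesis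
      using assms(1) unfolding covers_def by (force simp: nth_append)
  next
    case False
    then show ?thesis
      using \<open>d < D\<close> assms(2) by (intro exI[of _ "length as"]) auto
  qed
qed

lemma suffixes_cover_Nil: "D 0 = 0 \<Longrightarrow> suffixes_cover D []"
  by (simp add: suffixes_cover_def covers_def)

lemma suffixes_cover_suffix: "suffixes_cover D ys \<Longrightarrow> suffix zs ys \<Longrightarrow> suffixes_cover D zs"
  unfolding suffixes_cover_def by (meson suffix_order.trans)

lemma suffixes_cover_append_Cons:
  assumes as: "suffixes_cover (\<lambda>l. l) as" and bs: "suffixes_cover D bs"
    and x: "\<forall>l\<le>length as. D (Suc (l + length bs)) \<le> Suc x"
  shows "suffixes_cover D (as @ x # bs)"
  unfolding suffixes_cover_def
proof (intro allI impI)
  fix zs assume "suffix zs (as @ x # bs)"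
  then consider "suffix zs bs" | zs' where "suffix zs' as" "zs = zs' @ x # bs"
    by (auto simp: suffix_append suffix_Cons)
  then show "covers (D (length zs)) zs"
  proof cases
    case 1
    then show ?thesis using bs unfolding suffixes_cover_def by blast
  next
    case 2
    then have "covers (length zs') zs'"
      using as unfolding suffixes_cover_def by simp
    then show ?thesis
      using 2 x suffix_length_le[OF \<open>suffix zs' as\<close>] by (simp add: covers_append_Cons)
  qed
qed

fun dense_seq :: "nat \<Rightarrow> nat list" where
  "dense_seq k = (if k = 0 then [] else dense_seq (k div 2) @ (k - 1) # dense_seq ((k - 1) div 2))"

fun spine_seq :: "nat \<Rightarrow> nat list" where
  "spine_seq n = (if n = 0 then [] else
     dense_seq (3 * n div 10) @ (n - 1) div 2 # spine_seq (n - 3 * n div 10 - 1))"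

declare dense_seq.simps [simp del] spine_seq.simps [simp del]

lemma length_dense_seq: "length (dense_seq k) = k"
  by (induction k rule: dense_seq.induct) (subst dense_seq.simps, simp, linarith)

lemma dense_seq_less: "m \<in> set (dense_seq k) \<Longrightarrow> m < k"
  by (induction k rule: dense_seq.induct) (subst (asm) dense_seq.simps, auto split: if_splits)

lemma suffixes_cover_dense_seq: "suffixes_cover (\<lambda>l. l) (dense_seq k)"
proof (induction k rule: dense_seq.induct)
  case (1 k)
  show ?case
  proof (cases "k = 0")
    case True
    then show ?thesis by (simp add: dense_seq.simps suffixes_cover_Nil)
  next
    case False
    then show ?thesis
      using 1 by (subst dense_seq.simps) (auto intro!: suffixes_cover_append_Cons simp: length_dense_seq)
  qed
qed

lemma length_spine_seq: "length (spine_seq n) = n"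
  by (induction n rule: spine_seq.induct) (subst spine_seq.simps, simp add: length_dense_seq)

lemma spine_seq_less: "m \<in> set (spine_seq n) \<Longrightarrow> m < n"
  by (induction n rule: spine_seq.induct) (subst (asm) spine_seq.simps, auto split: if_splits dest: dense_seq_less)

lemma suffixes_cover_spine_seq: "suffixes_cover (\<lambda>l. (l + 1) div 2) (spine_seq n)"
proof (induction n rule: spine_seq.induct)
  case (1 n)
  show ?case
  proof (cases "n = 0")
    case True
    then show ?thesis by (simp add: spine_seq.simps suffixes_cover_Nil)
  next
    case False
    then show ?thesis
      using 1 by (subst spine_seq.simps)
        (auto intro!: suffixes_cover_append_Cons suffixes_cover_dense_seq
          simp: length_dense_seq length_spine_seq)
  qed
qed

definition universal :: "nat \<Rightarrow> rtree \<Rightarrow> bool" where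
  "universal n U \<longleftrightarrow> (\<forall>T. binary T \<and> card (nodes T) \<le> n \<longrightarrow> embeds T U)"

lemma embeds_spine_light_heavy:
  assumes H: "\<forall>m\<in>set ys. 0 < m \<longrightarrow> universal m (H m)"
    and cover: "covers ((length ys + 1) div 2) ys"
    and "binary L" and light: "card (nodes L) \<le> card (nodes B)"
    and size: "Suc (card (nodes L) + card (nodes B)) \<le> length ys"
    and heavy: "\<And>zs. suffix zs ys \<Longrightarrow> card (nodes B) \<le> length zs \<Longrightarrow> embeds B (spine H zs)"
  shows "embeds (Node [L, B]) (spine H ys) \<and> embeds (Node [B, L]) (spine H ys)"
proof -
  define d where "d = card (nodes L)"
  have "0 < d" "d < (length ys + 1) div 2"
    using card_nodes_pos light size unfolding d_def by auto
  then obtain i where i: "i \<le> d" "i < length ys" "d \<le> ys ! i"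
    using cover unfolding covers_def by blast
  have "Suc i < length ys"
    using i light size \<open>0 < d\<close> unfolding d_def by linarith
  have "embeds L (H (ys ! i))"
    using H i \<open>0 < d\<close> \<open>binary L\<close> unfolding d_def universal_def by auto
  moreover have "embeds B (spine H (drop (Suc i) ys))"
    using heavy i size unfolding d_def by (simp add: suffix_drop)
  moreover have "spine H (drop i ys) = Node [H (ys ! i), spine H (drop (Suc i) ys)]"
    using spine_drop_nth[OF \<open>Suc i < length ys\<close>] i \<open>0 < d\<close> by (simp add: pendant_def)
  ultimately show ?thesis
    using embeds_Node_pair embeds_spine_drop[OF i(2)] by metis
qed

lemma binary_embeds_spine:
  assumes H: "\<forall>m\<in>set ys. 0 < m \<longrightarrow> universal m (H m)"
    and cover: "suffixes_cover (\<lambda>l. (l + 1) div 2) ys"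
    and "binary T" "card (nodes T) \<le> length ys"
  shows "embeds T (spine H ys)"
  using assms
proof (induction T arbitrary: ys)
  case (Node ts)
  have "length ts \<le> 2" and binary_ts: "\<forall>t\<in>set ts. binary t"
    using Node.prems(3) by (auto simp: list_all_iff)
  then consider "ts = []" | A where "ts = [A]" | A B where "ts = [A, B]"
    by (cases ts rule: remdups_adj.cases) auto
  then show ?case
  proof cases
    case 1
    then show ?thesis by (cases "spine H ys") (simp add: embeds_leaf)
  next
    case 2
    then obtain y ys' where ys: "ys = y # ys'" and "card (nodes A) \<le> length ys'"
      using Node.prems(4) by (cases ys) (auto simp del: nodes.simps simp: card_nodes_Node)
    moreover have "ys' \<noteq> []"
      using calculation card_nodes_pos[of A] by auto
    moreover have "suffixes_cover (\<lambda>l. (l + 1) div 2) ys'"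
      using suffixes_cover_suffix[OF Node.prems(2), of ys'] ys by (simp add: suffix_Cons)
    moreover have "embeds A (spine H ys')"
      using Node.IH[of A ys'] Node.prems(1) binary_ts 2 calculation by auto
    ultimately show ?thesis
      using 2 by (auto simp: spine_Cons intro: embeds_Node_single[of "length (pendant H y)"])
  next
    case 3
    have cover_ys: "covers ((length ys + 1) div 2) ys"
      using Node.prems(2) unfolding suffixes_cover_def by simp
    have heavy: "embeds C (spine H zs)"
      if "C \<in> set ts" "suffix zs ys" "card (nodes C) \<le> length zs" for C zs
      using Node.IH[OF that(1), of zs] Node.prems(1,2) binary_ts that set_mono_suffix[OF that(2)]
      by (auto intro: suffixes_cover_suffix)
    have size: "Suc (card (nodes A) + card (nodes B)) \<le> length ys"
      using Node.prems(4) 3 by (simp del: nodes.simps add: card_nodes_Node)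
    show ?thesis
    proof (cases "card (nodes A) \<le> card (nodes B)")
      case True
      then show ?thesis
        using embeds_spine_light_heavy[OF Node.prems(1) cover_ys, of A B] heavy[of B] size binary_ts 3
        by auto
    next
      case False
      then show ?thesis
        using embeds_spine_light_heavy[OF Node.prems(1) cover_ys, of B A] heavy[of A] size binary_ts 3
        by auto
    qed
  qed
qed

section \<open>Size of the universal trees\<close>

definition beta :: real where
  "beta = 89 / 47"

(* The linear correction pays for the n spine nodes in sum_spine_seq_le. *)
definition size_bound :: "nat \<Rightarrow> real" where
  "size_bound m = (if m = 0 then 0 else real m powr beta - 3 / 2 * (real m - 1))"

(* 1 / (1 - 2 c) for the bound c = 67283/250000 on (1/2) powr beta, so that dense_bound solves
   the recurrence of dense_seq. *)
definition dense_coeff :: real where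
  "dense_coeff = 125000 / 57717"

definition dense_bound :: "nat \<Rightarrow> real" where
  "dense_bound k = (if k = 0 then 0 else dense_coeff * real k powr beta - 3 / 4 * (real k - 1))"

lemma powr_le_of_power_le:
  fixes x U :: real
  assumes "0 < x" "0 \<le> U" "0 < q" "x ^ p \<le> U ^ q"
  shows "x powr (p / q) \<le> U"
proof -
  have "(x powr (p / q)) ^ q = x ^ p"
    using assms(1,3) by (simp add: powr_realpow[symmetric] powr_powr)
  then have "(x powr (p / q)) ^ Suc (q - 1) \<le> U ^ Suc (q - 1)"
    using assms(3,4) by simp
  then show ?thesis
    using assms(2) by (rule power_le_imp_le_base)
qed

lemma le_powr_of_power_le:
  fixes x L :: real
  assumes "0 < x" "0 \<le> L" "0 < q" "L ^ q \<le> x ^ p"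
  shows "L \<le> x powr (p / q)"
proof -
  have "(x powr (p / q)) ^ q = x ^ p"
    using assms(1,3) by (simp add: powr_realpow[symmetric] powr_powr)
  then have "L ^ Suc (q - 1) \<le> (x powr (p / q)) ^ Suc (q - 1)"
    using assms(3,4) by simp
  then show ?thesis
    by (rule power_le_imp_le_base) simp
qed

lemma powr_beta_upper_bound:
  fixes x U :: real
  assumes "1 \<le> x" "0 \<le> U" "x ^ 19 \<le> U ^ 10"
  shows "x powr beta \<le> U"
proof -
  have "x powr beta \<le> x powr (19 / 10)"
    using assms(1) by (intro powr_mono) (simp_all add: beta_def)
  also have "\<dots> \<le> U"
    using powr_le_of_power_le[of x U 10 19] assms by simp
  finally show ?thesis .
qed

lemma powr_beta_lower_bound:
  fixes x L :: real
  assumes "1 \<le> x" "0 \<le> L" "L ^ 9 \<le> x ^ 17"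
  shows "L \<le> x powr beta"
proof -
  have "L \<le> x powr (17 / 9)"
    using le_powr_of_power_le[of x L 9 17] assms by simp
  also have "\<dots> \<le> x powr beta"
    using assms(1) by (intro powr_mono) (simp_all add: beta_def)
  finally show ?thesis .
qed

(* Brackets of m powr beta for m < 28, below which the linear terms in spine_bound_step_large are
   not yet absorbed. *)
definition powr_beta_lower :: "real list" where
  "powr_beta_lower =
    [0, 1, 3.7, 7.9, 13.7, 20.9, 29.5, 39.4, 50.7, 63.4, 77.4, 92.6, 109.2,
     127.0, 146.1, 166.5, 188.1, 210.9, 235.0, 260.2, 286.7, 314.4, 343.3,
     373.3, 404.6, 437.0, 470.6, 505.4]"

definition powr_beta_upper :: "real list" where
  "powr_beta_upper =
    [0, 1, 3.8, 8.1, 14.0, 21.3, 30.1, 40.4, 52.0, 65.1, 79.5, 95.3, 112.4,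
     130.8, 150.6, 171.7, 194.1, 217.7, 242.7, 269.0, 296.5, 325.3, 355.4,
     386.7, 419.2, 453.0, 488.1, 524.4]"

lemma powr_beta_table:
  assumes "m < 28"
  shows "powr_beta_lower ! m \<le> real m powr beta \<and> real m powr beta \<le> powr_beta_upper ! m"
proof (cases "m < 2")
  case True
  then show ?thesis
    by (auto simp: less_2_cases_iff powr_beta_lower_def powr_beta_upper_def)
next
  case False
  then have "m \<in> {2, 3, 4, 5, 6, 7, 8, 9, 10, 11, 12, 13, 14, 15, 16, 17, 18, 19,
              20, 21, 22, 23, 24, 25, 26, 27}"
    unfolding insert_iff empty_iff using assms by presburger
  then show ?thesis
    unfolding powr_beta_lower_def powr_beta_upper_def
    by (elim insertE emptyE; hypsubst; intro conjI powr_beta_lower_bound powr_beta_upper_bound; simp add: power_divide)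
qed

lemma powr_beta_le_of_power_le:
  fixes x U :: real
  assumes "0 < x" "0 \<le> U" "x ^ 89 \<le> U ^ 47"
  shows "x powr beta \<le> U"
  using powr_le_of_power_le[of x U 47 89] assms by (simp add: beta_def)

lemma powr_beta_fractions:
  "(1 / 2 :: real) powr beta \<le> 67283 / 250000"
  "(3 / 10 :: real) powr beta \<le> 102299 / 1000000"
  "(7 / 10 :: real) powr beta \<le> 10179 / 20000"
  by (rule powr_beta_le_of_power_le; simp add: power_divide)+

lemma powr_beta_scale:
  assumes "real a \<le> c * real n" "0 \<le> c" "c powr beta \<le> u"
  shows "real a powr beta \<le> u * real n powr beta"
proof -
  have "real a powr beta \<le> (c * real n) powr beta"
    using assms(1) by (intro powr_mono2) (auto simp: beta_def)
  also have "\<dots> = c powr beta * real n powr beta"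
    using assms(2) by (simp add: powr_mult)
  also have "\<dots> \<le> u * real n powr beta"
    using assms(3) by (intro mult_right_mono) auto
  finally show ?thesis .
qed

lemma dense_bound_step:
  assumes "3 \<le> k" "a + b + 1 = k" "2 * a \<le> k" "2 * b \<le> k"
  shows "dense_bound a + size_bound (k - 1) + dense_bound b \<le> dense_bound k"
proof -
  define K where "K = real k powr beta"
  have "real a powr beta \<le> 67283 / 250000 * K"
    unfolding K_def by (rule powr_beta_scale[OF _ _ powr_beta_fractions(1)]) (use assms in auto)
  moreover have "real b powr beta \<le> 67283 / 250000 * K"
    unfolding K_def by (rule powr_beta_scale[OF _ _ powr_beta_fractions(1)]) (use assms in auto)
  ultimately have powers: "dense_coeff * real a powr beta + dense_coeff * real b powr beta \<le>
      67283 / 125000 * (dense_coeff * K)"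
    by (simp add: dense_coeff_def)
  have coeff: "67283 / 125000 * (dense_coeff * K) + K = dense_coeff * K"
    by (simp add: dense_coeff_def algebra_simps)
  have middle: "real (k - 1) powr beta \<le> K"
    unfolding K_def by (intro powr_mono2) (auto simp: beta_def)
  have "a \<noteq> 0" "b \<noteq> 0" "k - 1 \<noteq> 0"
    using assms by auto
  then have "dense_bound a + size_bound (k - 1) + dense_bound b =
      dense_coeff * real a powr beta + dense_coeff * real b powr beta + real (k - 1) powr beta
      - 3 / 4 * (real a + real b - 2) - 3 / 2 * (real (k - 1) - 1)"
    by (simp add: dense_bound_def size_bound_def) argo
  moreover have "dense_bound k = dense_coeff * K - 3 / 4 * (real k - 1)"
    using assms(1) by (simp add: dense_bound_def K_def)
  moreover have "3 \<le> real k" "real a + real b + 1 = real k" "real (k - 1) = real k - 1"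
    using assms by (auto simp flip: assms(2))
  ultimately show ?thesis
    using powers coeff middle by argo
qed

lemma sum_dense_seq_le: "(\<Sum>m\<leftarrow>dense_seq k. size_bound m) \<le> dense_bound k"
proof (induction k rule: less_induct)
  case (less k)
  consider "k = 0" | "k = 1" | "k = 2" | "3 \<le> k"
    by linarith
  then show ?case
  proof cases
    case 3
    have "dense_seq 2 = [0, 1]"
      by (simp add: dense_seq.simps)
    moreover have "1 \<le> (2::real) powr beta"
      by (rule ge_one_powr_ge_zero) (simp_all add: beta_def)
    ultimately show ?thesis
      using 3 by (simp add: dense_bound_def size_bound_def dense_coeff_def)
  next
    case 4
    define a b where "a = k div 2" and "b = (k - 1) div 2"
    have "dense_seq k = dense_seq a @ (k - 1) # dense_seq b"
      using 4 unfolding a_def b_def by (subst dense_seq.simps) simp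
    moreover have "a < k" "b < k" "a + b + 1 = k" "2 * a \<le> k" "2 * b \<le> k"
      using 4 unfolding a_def b_def by auto
    ultimately show ?thesis
      using less[of a] less[of b] dense_bound_step[OF 4, of a b] by simp
  qed (simp_all add: dense_seq.simps dense_bound_def size_bound_def dense_coeff_def)
qed

lemma spine_bound_step_small:
  assumes "1 \<le> n" "n < 28" "k = 3 * n div 10" "M = (n - 1) div 2" "r = n - k - 1"
  shows "real n + dense_bound k + size_bound M + (size_bound r - real r) \<le> size_bound n"
proof -
  have "n \<in> {1, 2, 3, 4, 5, 6, 7, 8, 9, 10, 11, 12, 13, 14, 15, 16, 17, 18, 19,
              20, 21, 22, 23, 24, 25, 26, 27}"
    unfolding insert_iff empty_iff using assms(1,2) by presburger
  then show ?thesis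
    using assms powr_beta_table[of n] powr_beta_table[of k] powr_beta_table[of M] powr_beta_table[of r]
    by (elim insertE emptyE; simp add: size_bound_def dense_bound_def dense_coeff_def
        powr_beta_lower_def powr_beta_upper_def)
qed

lemma spine_bound_step_large:
  assumes "28 \<le> n" "k = 3 * n div 10" "M = (n - 1) div 2" "r = n - k - 1"
  shows "real n + dense_bound k + size_bound M + (size_bound r - real r) \<le> size_bound n"
proof -
  define N where "N = real n powr beta"
  have "real k powr beta \<le> 102299 / 1000000 * N"
    unfolding N_def by (rule powr_beta_scale[OF _ _ powr_beta_fractions(2)]) (use assms in auto)
  then have k_power: "dense_coeff * real k powr beta \<le> dense_coeff * (102299 / 1000000 * N)"
    by (simp add: dense_coeff_def)
  have M_power: "real M powr beta \<le> 67283 / 250000 * N"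
    unfolding N_def by (rule powr_beta_scale[OF _ _ powr_beta_fractions(1)]) (use assms in auto)
  have r_power: "real r powr beta \<le> 10179 / 20000 * N"
    unfolding N_def by (rule powr_beta_scale[OF _ _ powr_beta_fractions(3)]) (use assms in auto)
  have powers: "dense_coeff * (102299 / 1000000 * N) + 67283 / 250000 * N + 10179 / 20000 * N \<le> N"
    by (simp add: N_def dense_coeff_def algebra_simps)
  have "k \<noteq> 0" "M \<noteq> 0" "r \<noteq> 0" "n \<noteq> 0"
    using assms by auto
  then have "dense_bound k = dense_coeff * real k powr beta - 3 / 4 * (real k - 1)"
    "size_bound M = real M powr beta - 3 / 2 * (real M - 1)"
    "size_bound r = real r powr beta - 3 / 2 * (real r - 1)"
    "size_bound n = N - 3 / 2 * (real n - 1)"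
    by (simp_all add: dense_bound_def size_bound_def N_def)
  moreover have "10 * real k \<le> 3 * real n" "real n \<le> 2 * real M + 2" "real k + real r + 1 = real n"
    "28 \<le> real n"
    using assms by linarith+
  ultimately show ?thesis
    using k_power M_power r_power powers by argo
qed

lemma spine_bound_step:
  assumes "1 \<le> n" "k = 3 * n div 10" "M = (n - 1) div 2" "r = n - k - 1"
  shows "real n + dense_bound k + size_bound M + (size_bound r - real r) \<le> size_bound n"
proof (cases "n < 28")
  case True
  then show ?thesis using assms by (intro spine_bound_step_small)
next
  case False
  then show ?thesis using assms by (intro spine_bound_step_large) auto
qed

lemma sum_spine_seq_le: "real n + (\<Sum>m\<leftarrow>spine_seq n. size_bound m) \<le> size_bound n"
proof (induction n rule: less_induct)
  case (less n)
  show ?case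
  proof (cases "n = 0")
    case False
    define k M r where "k = 3 * n div 10" and "M = (n - 1) div 2" and "r = n - k - 1"
    have "spine_seq n = dense_seq k @ M # spine_seq r"
      using False unfolding k_def M_def r_def by (subst spine_seq.simps) simp
    then have "real n + (\<Sum>m\<leftarrow>spine_seq n. size_bound m) =
        real n + (\<Sum>m\<leftarrow>dense_seq k. size_bound m) + size_bound M + (\<Sum>m\<leftarrow>spine_seq r. size_bound m)"
      by simp
    also have "\<dots> \<le> real n + dense_bound k + size_bound M + (size_bound r - real r)"
      using sum_dense_seq_le[of k] less[of r] False unfolding r_def by simp
    also have "\<dots> \<le> size_bound n"
      using False by (intro spine_bound_step) (simp_all add: k_def M_def r_def)
    finally show ?thesis .
  qed (simp add: spine_seq.simps size_bound_def)
qed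

lemma universal_tree: "1 \<le> n \<Longrightarrow> \<exists>U. real (card (nodes U)) \<le> size_bound n \<and> universal n U"
proof (induction n rule: less_induct)
  case (less n)
  obtain H where H: "\<And>m. 1 \<le> m \<Longrightarrow> m < n \<Longrightarrow> real (card (nodes (H m))) \<le> size_bound m \<and> universal m (H m)"
    using less.IH by metis
  let ?ys = "spine_seq n"
  have "?ys \<noteq> []"
    using less.prems length_spine_seq[of n] by auto
  have "universal n (spine H ?ys)"
    using H spine_seq_less[of _ n] length_spine_seq[of n] suffixes_cover_spine_seq[of n]
    unfolding universal_def[of n] by (auto intro!: binary_embeds_spine)
  moreover have "real (card (nodes (spine H ?ys))) \<le> real n + (\<Sum>m\<leftarrow>?ys. size_bound m)"
  proof -
    have "real (card (nodes (spine H ?ys))) =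
        real n + (\<Sum>m\<leftarrow>?ys. real (\<Sum>t\<leftarrow>pendant H m. card (nodes t)))"
      using card_nodes_spine[OF \<open>?ys \<noteq> []\<close>, of H] length_spine_seq[of n]
      by (simp add: sum_list_of_nat[symmetric] o_def)
    also have "\<dots> \<le> real n + (\<Sum>m\<leftarrow>?ys. size_bound m)"
      using H spine_seq_less[of _ n]
      by (intro add_left_mono sum_list_mono) (auto simp: pendant_def size_bound_def)
    finally show ?thesis .
  qed
  ultimately show ?case
    using sum_spine_seq_le[of n] by (intro exI[of _ "spine H ?ys"]) auto
qed

lemma size_bound_le_powr: "size_bound n \<le> real n powr (1894 / 1000)"
proof (cases "n = 0")
  case False
  then have "size_bound n \<le> real n powr beta"
    by (simp add: size_bound_def)
  also have "\<dots> \<le> real n powr (1894 / 1000)"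
    using False by (intro powr_mono) (auto simp: beta_def)
  finally show ?thesis .
qed (simp add: size_bound_def)

section \<open>Labeling scheme\<close>

lemma powr_le_two_power_ceiling:
  fixes x c :: real
  assumes "1 \<le> x" "0 \<le> c"
  shows "x powr c \<le> 2 ^ nat \<lceil>c * log 2 x\<rceil>"
proof -
  have "x powr c = (2 powr log 2 x) powr c"
    using assms(1) by simp
  also have "\<dots> = 2 powr (c * log 2 x)"
    by (simp add: powr_powr mult.commute)
  also have "\<dots> \<le> 2 powr real (nat \<lceil>c * log 2 x\<rceil>)"
    by (intro powr_mono real_nat_ceiling_ge) simp
  also have "\<dots> = 2 ^ nat \<lceil>c * log 2 x\<rceil>"
    by (simp add: powr_realpow)
  finally show ?thesis .
qed

lemma nca_labeling_of_universal:
  assumes card: "card (nodes U) \<le> 2 ^ K" and minor: "\<forall>T. P T \<longrightarrow> top_minor T U"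
    and "real K \<le> L"
  shows "\<exists>dec :: bool list \<Rightarrow> bool list \<Rightarrow> bool list. \<forall>T. P T \<longrightarrow>
    (\<exists>enc :: nat list \<Rightarrow> bool list. inj_on enc (nodes T) \<and> (\<forall>u\<in>nodes T. real (length (enc u)) \<le> L) \<and>
       (\<forall>u\<in>nodes T. \<forall>v\<in>nodes T. dec (enc u) (enc v) = enc (nca u v)))"
proof -
  define S where "S = {xs :: bool list. set xs \<subseteq> UNIV \<and> length xs = K}"
  have "card S = 2 ^ K"
    unfolding S_def using card_lists_length_eq[of "UNIV :: bool set" K]
    by (simp only: card_UNIV_bool finite_UNIV)
  moreover have "finite S"
    unfolding S_def using finite_lists_length_eq[of "UNIV :: bool set" K] by (simp only: finite_UNIV simp_thms)
  ultimately obtain lab where lab: "inj_on lab (nodes U)" "lab ` nodes U \<subseteq> S"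
    using card_le_inj[OF finite_nodes[of U]] card by metis
  define dec where "dec a b = lab (nca (inv_into (nodes U) lab a) (inv_into (nodes U) lab b))" for a b
  have "\<exists>enc :: nat list \<Rightarrow> bool list. inj_on enc (nodes T) \<and> (\<forall>u\<in>nodes T. real (length (enc u)) \<le> L) \<and>
      (\<forall>u\<in>nodes T. \<forall>v\<in>nodes T. dec (enc u) (enc v) = enc (nca u v))" if PT: "P T" for T
  proof -
    obtain f where f: "inj_on f (nodes T)" "f ` nodes T \<subseteq> nodes U"
      "\<forall>u\<in>nodes T. \<forall>v\<in>nodes T. f (nca u v) = nca (f u) (f v)"
      using minor PT unfolding top_minor_def by blast
    have inv: "inv_into (nodes U) lab (lab (f u)) = f u" if "u \<in> nodes T" for u
      using f(2) lab(1) that by (simp add: inv_into_f_f subsetD)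
    have "inj_on (lab \<circ> f) (nodes T)"
      using f(1) inj_on_subset[OF lab(1) f(2)] by (rule comp_inj_on)
    moreover have "\<forall>u\<in>nodes T. real (length ((lab \<circ> f) u)) \<le> L"
      using f(2) lab(2) \<open>real K \<le> L\<close> unfolding S_def by auto
    moreover have "\<forall>u\<in>nodes T. \<forall>v\<in>nodes T. dec ((lab \<circ> f) u) ((lab \<circ> f) v) = (lab \<circ> f) (nca u v)"
      using inv f(3) by (simp add: dec_def)
    ultimately show ?thesis
      by blast
  qed
  then show ?thesis
    by (intro exI[of _ dec]) blast
qed

theorem mainTheorem1:
  fixes n :: nat
  assumes "n \<ge> 1"
  shows "(\<exists>U. real (card (nodes U)) \<le> real n powr (1894/1000) \<and>
            (\<forall>T. binary T \<and> card (nodes T) = n \<longrightarrow> top_minor T U))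
       \<and> (\<exists>dec :: bool list \<Rightarrow> bool list \<Rightarrow> bool list.
            \<forall>T. binary T \<and> card (nodes T) = n \<longrightarrow>
              (\<exists>enc :: nat list \<Rightarrow> bool list.
                 inj_on enc (nodes T) \<and>
                 (\<forall>u\<in>nodes T. real (length (enc u)) \<le> of_int \<lceil>(1894/1000) * log 2 (real n)\<rceil>) \<and>
                 (\<forall>u\<in>nodes T. \<forall>v\<in>nodes T. dec (enc u) (enc v) = enc (nca u v))))"
proof -
  define K where "K = nat \<lceil>(1894/1000) * log 2 (real n)\<rceil>"
  obtain U where U: "real (card (nodes U)) \<le> size_bound n" "universal n U"
    using universal_tree[OF assms] by blast
  have size: "real (card (nodes U)) \<le> real n powr (1894/1000)"
    using U(1) size_bound_le_powr by (rule order_trans)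
  have minor: "\<forall>T. binary T \<and> card (nodes T) = n \<longrightarrow> top_minor T U"
    using U(2) unfolding universal_def by (auto intro: embeds_imp_top_minor)
  have "real (card (nodes U)) \<le> 2 ^ K"
    using order_trans[OF size powr_le_two_power_ceiling[of "real n" "1894/1000"]] assms
    unfolding K_def by simp
  then have card: "card (nodes U) \<le> 2 ^ K"
    by (metis of_nat_le_iff of_nat_numeral of_nat_power)
  have K: "real K \<le> of_int \<lceil>(1894/1000) * log 2 (real n)\<rceil>"
    using assms unfolding K_def by simp
  have "\<exists>dec :: bool list \<Rightarrow> bool list \<Rightarrow> bool list.
      \<forall>T. binary T \<and> card (nodes T) = n \<longrightarrow>
        (\<exists>enc :: nat list \<Rightarrow> bool list. inj_on enc (nodes T) \<and>
           (\<forall>u\<in>nodes T. real (length (enc u)) \<le> of_int \<lceil>(1894/1000) * log 2 (real n)\<rceil>) \<and>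
           (\<forall>u\<in>nodes T. \<forall>v\<in>nodes T. dec (enc u) (enc v) = enc (nca u v)))"
    using card minor K by (rule nca_labeling_of_universal)
  with size minor show ?thesis
    by blast
qed

end
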